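(* If $G$ is a tree, then $\mathcal{P}(G)=\mathcal{T}(G)$.
   Context: A tree is a connected graph with no cycle. A co-2-plex is a vertex set inducing a subgraph of maximum degree at most 1. $\mathcal{P}(G)=\mathrm{conv}\{\chi^S : S\text{ co-2-plex of } G\}\subseteq\mathbb{R}^V$. $\mathcal{T}(G)$ is the polytope of $x\in\mathbb{R}^V$ satisfying $0\le x\le 1$ and $x(W)+(|W|-1)x_w\le|W|$ for all $w\in V$ and $W\subseteq N(w)$, where $x(A)=\sum_{a\in A}x_a$. *)

theory Defs
  imports "HOL-Analysis.Analysis"
begin

text \<open>A finite simple graph on the finite vertex type 'n (vertex set V = UNIV),
given by an adjacency relation E. R^V is modelled as real^'n.\<close>

definition simple_graph :: "('n::finite \<Rightarrow> 'n \<Rightarrow> bool) \<Rightarrow> bool" where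
  "simple_graph E \<longleftrightarrow> (\<forall>u v. E u v \<longrightarrow> E v u) \<and> (\<forall>v. \<not> E v v)"

definition graph_connected :: "('n::finite \<Rightarrow> 'n \<Rightarrow> bool) \<Rightarrow> bool" where
  "graph_connected E \<longleftrightarrow> (\<forall>u v. E\<^sup>*\<^sup>* u v)"

definition has_cycle :: "('n::finite \<Rightarrow> 'n \<Rightarrow> bool) \<Rightarrow> bool" where
  "has_cycle E \<longleftrightarrow> (\<exists>vs. length vs \<ge> 3 \<and> distinct vs \<and>
     (\<forall>i < length vs. E (vs ! i) (vs ! ((i + 1) mod length vs))))"

definition is_tree :: "('n::finite \<Rightarrow> 'n \<Rightarrow> bool) \<Rightarrow> bool" where
  "is_tree E \<longleftrightarrow> simple_graph E \<and> graph_connected E \<and> \<not> has_cycle E"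

definition nbhd :: "('n::finite \<Rightarrow> 'n \<Rightarrow> bool) \<Rightarrow> 'n \<Rightarrow> 'n set" where
  "nbhd E w = {u. E w u}"

definition co2plex :: "('n::finite \<Rightarrow> 'n \<Rightarrow> bool) \<Rightarrow> 'n set \<Rightarrow> bool" where
  "co2plex E S \<longleftrightarrow> (\<forall>v\<in>S. card (nbhd E v \<inter> S) \<le> 1)"

definition charvec :: "'n::finite set \<Rightarrow> real ^ 'n" where
  "charvec S = (\<chi> v. if v \<in> S then 1 else 0)"

definition co2plex_polytope :: "('n::finite \<Rightarrow> 'n \<Rightarrow> bool) \<Rightarrow> (real ^ 'n) set" where
  "co2plex_polytope E = convex hull {charvec S | S. co2plex E S}"

definition T_polytope :: "('n::finite \<Rightarrow> 'n \<Rightarrow> bool) \<Rightarrow> (real ^ 'n) set" where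
  "T_polytope E = {x. (\<forall>v. 0 \<le> x $ v \<and> x $ v \<le> 1) \<and>
     (\<forall>w W. W \<subseteq> nbhd E w \<longrightarrow>
        (\<Sum>a\<in>W. x $ a) + (real (card W) - 1) * x $ w \<le> real (card W))}"

end

theory Submission
  imports Defs
begin

text \<open>For \<open>x \<in> T(G)\<close> we build, adding one leaf at a time, a probability distribution on the
  co-2-plexes with vertex marginals \<open>x\<close> in which every edge \<open>uv\<close> is covered with the least
  possible probability \<open>max 0 (x\<^sub>u + x\<^sub>v - 1)\<close>; for the whole vertex set it writes \<open>x\<close> as a
  convex combination of co-2-plexes. A new leaf \<open>l\<close> with neighbour \<open>p\<close> may only join a
  co-2-plex \<open>S\<close> if \<open>p \<notin> S\<close> or \<open>p\<close> is isolated in \<open>S\<close>. By tightness on the edges at \<open>p\<close>,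
  the probability that \<open>p\<close> is isolated is \<open>x\<^sub>p\<close> minus the sum of \<open>max 0 (x\<^sub>p + x\<^sub>u - 1)\<close>
  over the old neighbours \<open>u\<close>, and the inequality of \<open>T(G)\<close> for \<open>p\<close> and the set of \<open>l\<close>
  and those \<open>u\<close> with \<open>x\<^sub>p + x\<^sub>u > 1\<close> says exactly that this is at least
  \<open>x\<^sub>l + x\<^sub>p - 1\<close>. The inclusion of the co-2-plex polytope in \<open>T(G)\<close> holds for every graph.\<close>

definition is_path :: "('a \<Rightarrow> 'a \<Rightarrow> bool) \<Rightarrow> 'a list \<Rightarrow> bool" where
  "is_path E vs \<longleftrightarrow> distinct vs \<and> (\<forall>i. Suc i < length vs \<longrightarrow> E (vs ! i) (vs ! Suc i))"

lemma is_path_Cons: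
  "is_path E (u # vs) \<longleftrightarrow> is_path E vs \<and> u \<notin> set vs \<and> (vs \<noteq> [] \<longrightarrow> E u (hd vs))"
  unfolding is_path_def by (cases vs) (auto simp: nth_Cons less_Suc_eq_0_disj)

lemma path_chord_imp_cycle:
  fixes E :: "'n::finite \<Rightarrow> 'n \<Rightarrow> bool"
  assumes path: "is_path E vs" and j: "2 \<le> j" "j < length vs" and chord: "E (vs ! j) (vs ! 0)"
  shows "has_cycle E"
  unfolding has_cycle_def
proof (intro exI conjI allI impI)
  let ?c = "take (Suc j) vs"
  show "3 \<le> length ?c" "distinct ?c" using j path by (auto simp: is_path_def)
  fix i assume "i < length ?c"
  then consider "i < j" | "i = j" using j by fastforce
  then show "E (?c ! i) (?c ! ((i + 1) mod length ?c))"
    by cases (use j path chord in \<open>auto simp: is_path_def\<close>)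
qed

lemma ex_maximal_path:
  fixes V :: "'n::finite set"
  assumes "V \<noteq> {}"
  shows "\<exists>v vs. is_path E (v # vs) \<and> set (v # vs) \<subseteq> V \<and> (\<forall>u\<in>V. E u v \<longrightarrow> u \<in> set (v # vs))"
proof -
  let ?paths = "{vs. is_path E vs \<and> set vs \<subseteq> V \<and> vs \<noteq> []}"
  obtain v0 where "v0 \<in> V" using assms by auto
  then have "[v0] \<in> ?paths" by (auto simp: is_path_def)
  moreover have "length vs < Suc (card V)" if "vs \<in> ?paths" for vs
    using that distinct_card[of vs] card_mono[of V "set vs"] by (auto simp: is_path_def)
  ultimately obtain vs where vs: "vs \<in> ?paths" and longest: "\<And>ws. ws \<in> ?paths \<Longrightarrow> length ws \<le> length vs"
    using Lattices_Big.ex_has_greatest_nat[of "\<lambda>vs. vs \<in> ?paths" "[v0]" length "Suc (card V)"] by blast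
  then obtain v rest where "vs = v # rest" by (cases vs) auto
  moreover have "u \<in> set vs" if "u \<in> V" "E u v" for u
    using longest[of "u # vs"] that vs \<open>vs = v # rest\<close> by (force simp: is_path_Cons)
  ultimately show ?thesis using vs by blast
qed

lemma acyclic_ex_leaf:
  fixes E :: "'n::finite \<Rightarrow> 'n \<Rightarrow> bool"
  assumes "simple_graph E" and "\<not> has_cycle E" and "V \<noteq> {}"
  shows "\<exists>l\<in>V. \<forall>u\<in>V. \<forall>u'\<in>V. E l u \<longrightarrow> E l u' \<longrightarrow> u = u'"
proof (rule ccontr)
  assume "\<not> ?thesis"
  obtain v vs where path: "is_path E (v # vs)" and "set (v # vs) \<subseteq> V"
    and maximal: "\<forall>u\<in>V. E u v \<longrightarrow> u \<in> set (v # vs)"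
    using ex_maximal_path[OF \<open>V \<noteq> {}\<close>] by blast
  with \<open>\<not> ?thesis\<close> obtain u u' where "u \<in> V" "u' \<in> V" "E v u" "E v u'" "u \<noteq> u'"
    by auto
  have sym: "E v u \<Longrightarrow> E u v" and irrefl: "\<not> E v v" for u v
    using \<open>simple_graph E\<close> by (auto simp: simple_graph_def)
  have position: "\<exists>j. 0 < j \<and> j < length (v # vs) \<and> (v # vs) ! j = w"
    if w: "w \<in> V" "E v w" for w
  proof -
    obtain j where "j < length (v # vs)" "(v # vs) ! j = w"
      using maximal sym w by (meson in_set_conv_nth)
    moreover have "0 < j" using calculation irrefl w(2) by (metis gr0I nth_Cons_0)
    ultimately show ?thesis by blast
  qed
  obtain j j' where j: "0 < j" "j < length (v # vs)" "(v # vs) ! j = u"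
    and j': "0 < j'" "j' < length (v # vs)" "(v # vs) ! j' = u'"
    using position[OF \<open>u \<in> V\<close> \<open>E v u\<close>] position[OF \<open>u' \<in> V\<close> \<open>E v u'\<close>] by blast
  have no_chord: "\<not> E ((v # vs) ! k) v" if "2 \<le> k" "k < length (v # vs)" for k
    using path_chord_imp_cycle[OF path that] \<open>\<not> has_cycle E\<close> by auto
  have "j \<noteq> j'" using j j' \<open>u \<noteq> u'\<close> by auto
  then have "2 \<le> j \<or> 2 \<le> j'" using j j' by linarith
  then show False
    using no_chord j j' sym \<open>E v u\<close> \<open>E v u'\<close> by metis
qed

lemma convex_linear_halfspace:
  fixes f :: "'a::real_vector \<Rightarrow> real"
  assumes "linear f"
  shows "convex {x. f x \<le> c}" and "convex {x. c \<le> f x}"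
  using convex_linear_vimage[OF assms convex_real_interval(2)[of c]]
    convex_linear_vimage[OF assms convex_real_interval(1)[of c]]
  by (simp_all add: vimage_def)

lemma convex_T_polytope: "convex (T_polytope E)"
proof -
  have "T_polytope E = (\<Inter>v. {x. 0 \<le> x $ v} \<inter> {x. x $ v \<le> 1}) \<inter>
      (\<Inter>(w, W)\<in>{(w, W). W \<subseteq> nbhd E w}.
        {x. (\<Sum>a\<in>W. x $ a) + (real (card W) - 1) * x $ w \<le> real (card W)})"
    unfolding T_polytope_def by auto
  then show ?thesis
    by (auto intro!: convex_INT convex_Int convex_linear_halfspace bounded_linear.linear
        bounded_linear_add bounded_linear_sum bounded_linear_const_mult)
qed

lemma charvec_in_T_polytope:
  assumes "co2plex E S"
  shows "charvec S \<in> T_polytope E"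
proof -
  have "(\<Sum>a\<in>W. charvec S $ a) + (real (card W) - 1) * charvec S $ w \<le> real (card W)"
    if "W \<subseteq> nbhd E w" for w W
  proof -
    have sum: "(\<Sum>a\<in>W. charvec S $ a) = real (card (W \<inter> S))"
      by (simp add: charvec_def of_bool_def[symmetric] Collect_mem_eq)
    have "card (W \<inter> S) \<le> card W" by (rule card_mono) auto
    moreover have "card (W \<inter> S) \<le> 1" if "w \<in> S"
      using assms that \<open>W \<subseteq> nbhd E w\<close> card_mono[of "nbhd E w \<inter> S" "W \<inter> S"]
      unfolding co2plex_def by fastforce
    ultimately show ?thesis using sum by (cases "w \<in> S") (auto simp: charvec_def)
  qed
  then show ?thesis unfolding T_polytope_def by (auto simp: charvec_def)
qed

definition co2plex_distribution ::
  "('n::finite \<Rightarrow> 'n \<Rightarrow> bool) \<Rightarrow> real ^ 'n \<Rightarrow> 'n set \<Rightarrow> ('n set \<Rightarrow> real) \<Rightarrow> bool" where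
  "co2plex_distribution E x V \<mu> \<longleftrightarrow>
     (\<forall>S. 0 \<le> \<mu> S) \<and> (\<forall>S. \<mu> S \<noteq> 0 \<longrightarrow> S \<subseteq> V \<and> co2plex E S) \<and> (\<Sum>S\<in>UNIV. \<mu> S) = 1 \<and>
     (\<forall>v\<in>V. (\<Sum>S\<in>UNIV. \<mu> S * of_bool (v \<in> S)) = x $ v) \<and>
     (\<forall>u\<in>V. \<forall>v\<in>V. E u v \<longrightarrow>
        (\<Sum>S\<in>UNIV. \<mu> S * of_bool (u \<in> S \<and> v \<in> S)) = max 0 (x $ u + x $ v - 1))"

lemma co2plex_distribution_imp_in_co2plex_polytope:
  assumes "co2plex_distribution E x UNIV \<mu>"
  shows "x \<in> co2plex_polytope E"
proof -
  have nonneg: "\<And>S. 0 \<le> \<mu> S" and supp: "\<And>S. \<mu> S \<noteq> 0 \<Longrightarrow> co2plex E S"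
    and total: "(\<Sum>S\<in>UNIV. \<mu> S) = 1" and marg: "\<And>v. (\<Sum>S\<in>UNIV. \<mu> S * of_bool (v \<in> S)) = x $ v"
    using assms unfolding co2plex_distribution_def by auto
  define C where "C = {S. co2plex E S}"
  have restrict: "(\<Sum>S\<in>UNIV. f S) = (\<Sum>S\<in>C. f S)" if "\<And>S. \<mu> S = 0 \<Longrightarrow> f S = 0" for f
    by (rule sum.mono_neutral_right) (use that supp in \<open>auto simp: C_def\<close>)
  have "(\<Sum>S\<in>C. \<mu> S *\<^sub>R charvec S) \<in> co2plex_polytope E"
    unfolding co2plex_polytope_def
    by (rule convex_sum) (use nonneg total restrict[of \<mu>] in \<open>auto simp: C_def intro: hull_inc\<close>)
  moreover have "(\<Sum>S\<in>C. \<mu> S *\<^sub>R charvec S) = x"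
    unfolding vec_eq_iff
    using marg restrict[of "\<lambda>S. \<mu> S * of_bool (v \<in> S)" for v] by (simp add: charvec_def of_bool_def)
  ultimately show ?thesis by simp
qed

text \<open>Draw \<open>S\<close> according to \<open>\<mu>\<close> and then add \<open>l\<close> to it with probability \<open>\<alpha> S\<close>.\<close>

definition extend_distribution :: "('a set \<Rightarrow> real) \<Rightarrow> ('a set \<Rightarrow> real) \<Rightarrow> 'a \<Rightarrow> 'a set \<Rightarrow> real" where
  "extend_distribution \<mu> \<alpha> l T =
     (if l \<in> T then \<mu> (T - {l}) * \<alpha> (T - {l}) else \<mu> T * (1 - \<alpha> T))"

lemma sum_extend_distribution:
  fixes \<mu> :: "'a::finite set \<Rightarrow> real"
  assumes "\<And>S. \<mu> S \<noteq> 0 \<Longrightarrow> l \<notin> S"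
  shows "(\<Sum>T\<in>UNIV. extend_distribution \<mu> \<alpha> l T * f T) =
         (\<Sum>S\<in>UNIV. \<mu> S * (\<alpha> S * f (insert l S) + (1 - \<alpha> S) * f S))"
proof -
  let ?A = "{S. l \<notin> S}"
  have inj: "inj_on (insert l) ?A" by (auto simp: inj_on_def)
  have "T \<in> ?A \<union> insert l ` ?A" for T
    by (cases "l \<in> T") (auto intro!: image_eqI[of _ _ "T - {l}"])
  then have split: "UNIV = ?A \<union> insert l ` ?A" by auto
  have "(\<Sum>T\<in>UNIV. extend_distribution \<mu> \<alpha> l T * f T) =
      (\<Sum>T\<in>?A. extend_distribution \<mu> \<alpha> l T * f T) +
      (\<Sum>T\<in>insert l ` ?A. extend_distribution \<mu> \<alpha> l T * f T)"
    by (subst split, rule sum.union_disjoint) auto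
  also have "\<dots> = (\<Sum>S\<in>?A. \<mu> S * (1 - \<alpha> S) * f S) + (\<Sum>S\<in>?A. \<mu> S * \<alpha> S * f (insert l S))"
    using inj by (simp add: sum.reindex extend_distribution_def)
  also have "\<dots> = (\<Sum>S\<in>?A. \<mu> S * (\<alpha> S * f (insert l S) + (1 - \<alpha> S) * f S))"
    by (simp add: sum.distrib[symmetric] algebra_simps)
  also have "\<dots> = (\<Sum>S\<in>UNIV. \<mu> S * (\<alpha> S * f (insert l S) + (1 - \<alpha> S) * f S))"
    by (rule sum.mono_neutral_left) (use assms in auto)
  finally show ?thesis .
qed

lemma sum_extend_distribution_lift:
  fixes \<mu> :: "'a::finite set \<Rightarrow> real"
  assumes "\<And>S. \<mu> S \<noteq> 0 \<Longrightarrow> l \<notin> S" and "\<And>S. l \<notin> S \<Longrightarrow> f (insert l S) = f S"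
  shows "(\<Sum>T\<in>UNIV. extend_distribution \<mu> \<alpha> l T * f T) = (\<Sum>S\<in>UNIV. \<mu> S * f S)"
proof -
  have "(\<Sum>T\<in>UNIV. extend_distribution \<mu> \<alpha> l T * f T) =
      (\<Sum>S\<in>UNIV. \<mu> S * (\<alpha> S * f (insert l S) + (1 - \<alpha> S) * f S))"
    by (rule sum_extend_distribution[OF assms(1)])
  also have "\<dots> = (\<Sum>S\<in>UNIV. \<mu> S * f S)"
    using assms by (intro sum.cong) (auto simp: algebra_simps)
  finally show ?thesis .
qed

lemma sum_extend_distribution_new:
  fixes \<mu> :: "'a::finite set \<Rightarrow> real"
  assumes "\<And>S. \<mu> S \<noteq> 0 \<Longrightarrow> l \<notin> S" and "\<And>S. l \<notin> S \<Longrightarrow> f S = 0"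
  shows "(\<Sum>T\<in>UNIV. extend_distribution \<mu> \<alpha> l T * f T) = (\<Sum>S\<in>UNIV. \<mu> S * (\<alpha> S * f (insert l S)))"
proof -
  have "(\<Sum>T\<in>UNIV. extend_distribution \<mu> \<alpha> l T * f T) =
      (\<Sum>S\<in>UNIV. \<mu> S * (\<alpha> S * f (insert l S) + (1 - \<alpha> S) * f S))"
    by (rule sum_extend_distribution[OF assms(1)])
  also have "\<dots> = (\<Sum>S\<in>UNIV. \<mu> S * (\<alpha> S * f (insert l S)))"
    using assms by (intro sum.cong) auto
  finally show ?thesis .
qed

lemma co2plex_insert:
  assumes "simple_graph E" and "co2plex E S" and "card (nbhd E l \<inter> S) \<le> 1"
    and "\<And>p. p \<in> nbhd E l \<inter> S \<Longrightarrow> nbhd E p \<inter> S = {}"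
  shows "co2plex E (insert l S)"
  unfolding co2plex_def
proof
  have sym: "E u v \<Longrightarrow> E v u" and irrefl: "\<not> E v v" for u v
    using \<open>simple_graph E\<close> by (auto simp: simple_graph_def)
  fix v assume "v \<in> insert l S"
  then consider "v = l" | "v \<in> S" "E v l" | "v \<in> S" "\<not> E v l" by blast
  then show "card (nbhd E v \<inter> insert l S) \<le> 1"
  proof cases
    case 1
    then have "nbhd E v \<inter> insert l S = nbhd E l \<inter> S" using irrefl by (auto simp: nbhd_def)
    then show ?thesis using assms(3) by simp
  next
    case 2
    then have "nbhd E v \<inter> S = {}" using assms(4)[of v] sym by (auto simp: nbhd_def)
    then have "nbhd E v \<inter> insert l S = {l}" using \<open>E v l\<close> by (auto simp: nbhd_def)
    then show ?thesis by simp
  next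
    case 3
    then have "nbhd E v \<inter> insert l S = nbhd E v \<inter> S" by (auto simp: nbhd_def)
    then show ?thesis using \<open>co2plex E S\<close> \<open>v \<in> S\<close> by (simp add: co2plex_def)
  qed
qed

lemma co2plex_distribution_extend:
  assumes "simple_graph E" and \<mu>: "co2plex_distribution E x V \<mu>" and "l \<notin> V"
    and \<alpha>: "\<And>S. 0 \<le> \<alpha> S \<and> \<alpha> S \<le> 1"
    and insert_co2plex: "\<And>S. \<mu> S \<noteq> 0 \<Longrightarrow> \<alpha> S \<noteq> 0 \<Longrightarrow> co2plex E (insert l S)"
    and marg_l: "(\<Sum>S\<in>UNIV. \<mu> S * \<alpha> S) = x $ l"
    and edge_l: "\<And>u. u \<in> V \<Longrightarrow> E u l \<Longrightarrow>
       (\<Sum>S\<in>UNIV. \<mu> S * (\<alpha> S * of_bool (u \<in> S))) = max 0 (x $ u + x $ l - 1)"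
  shows "co2plex_distribution E x (insert l V) (extend_distribution \<mu> \<alpha> l)"
proof -
  have sym: "E u v \<Longrightarrow> E v u" and irrefl: "\<not> E v v" for u v
    using \<open>simple_graph E\<close> by (auto simp: simple_graph_def)
  have nonneg: "\<And>S. 0 \<le> \<mu> S" and supp: "\<And>S. \<mu> S \<noteq> 0 \<Longrightarrow> S \<subseteq> V \<and> co2plex E S"
    and total: "(\<Sum>S\<in>UNIV. \<mu> S) = 1"
    and marg: "\<And>v. v \<in> V \<Longrightarrow> (\<Sum>S\<in>UNIV. \<mu> S * of_bool (v \<in> S)) = x $ v"
    and edge: "\<And>u v. u \<in> V \<Longrightarrow> v \<in> V \<Longrightarrow> E u v \<Longrightarrow>
       (\<Sum>S\<in>UNIV. \<mu> S * of_bool (u \<in> S \<and> v \<in> S)) = max 0 (x $ u + x $ v - 1)"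
    using \<mu> unfolding co2plex_distribution_def by auto
  have l_notin: "\<And>S. \<mu> S \<noteq> 0 \<Longrightarrow> l \<notin> S" using supp \<open>l \<notin> V\<close> by blast
  note lift = sum_extend_distribution_lift[OF l_notin] and new = sum_extend_distribution_new[OF l_notin]
  let ?\<mu>' = "extend_distribution \<mu> \<alpha> l"
  have "?\<mu>' T \<noteq> 0 \<Longrightarrow> T \<subseteq> insert l V \<and> co2plex E T" for T
    using supp[of T] supp[of "T - {l}"] insert_co2plex[of "T - {l}"]
    by (cases "l \<in> T") (auto simp: extend_distribution_def insert_absorb)
  moreover have "(\<Sum>T\<in>UNIV. ?\<mu>' T) = 1"
    using lift[where f = "\<lambda>_. 1"] total by simp
  moreover have "(\<Sum>T\<in>UNIV. ?\<mu>' T * of_bool (v \<in> T)) = x $ v" if "v \<in> insert l V" for v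
    using that lift[where f = "\<lambda>T. of_bool (v \<in> T)"] new[where f = "\<lambda>T. of_bool (v \<in> T)"] marg marg_l
    by (cases "v = l") auto
  moreover have "(\<Sum>T\<in>UNIV. ?\<mu>' T * of_bool (u \<in> T \<and> v \<in> T)) = max 0 (x $ u + x $ v - 1)"
    if uv: "u \<in> insert l V" "v \<in> insert l V" "E u v" for u v
  proof -
    consider "u = l" "v \<in> V" | "v = l" "u \<in> V" | "u \<in> V" "v \<in> V"
      using uv irrefl by blast
    then show ?thesis
    proof cases
      case 1
      then show ?thesis
        using new[where f = "\<lambda>T. of_bool (u \<in> T \<and> v \<in> T)"] edge_l[of v] \<open>E u v\<close> sym \<open>l \<notin> V\<close>
        by (auto simp: add.commute)
    next
      case 2
      then show ?thesis
        using new[where f = "\<lambda>T. of_bool (u \<in> T \<and> v \<in> T)"] edge_l[of u] \<open>E u v\<close> \<open>l \<notin> V\<close> by auto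
    next
      case 3
      then have "u \<noteq> l" "v \<noteq> l" using \<open>l \<notin> V\<close> by auto
      then show ?thesis
        using lift[where f = "\<lambda>T. of_bool (u \<in> T \<and> v \<in> T)"] edge[OF 3 \<open>E u v\<close>] by simp
    qed
  qed
  ultimately show ?thesis
    using nonneg \<alpha> unfolding co2plex_distribution_def by (auto simp: extend_distribution_def)
qed

lemma co2plex_member_split:
  assumes "co2plex E S" and "S \<subseteq> V"
  shows "of_bool (p \<in> S) =
    of_bool (p \<in> S \<and> nbhd E p \<inter> S = {}) + (\<Sum>u\<in>nbhd E p \<inter> V. of_bool (p \<in> S \<and> u \<in> S) :: real)"
proof (cases "p \<in> S")
  case True
  have "nbhd E p \<inter> V \<inter> {u. p \<in> S \<and> u \<in> S} = nbhd E p \<inter> S" using True \<open>S \<subseteq> V\<close> by auto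
  moreover have "card (nbhd E p \<inter> S) \<le> 1" using assms True by (auto simp: co2plex_def)
  ultimately show ?thesis using True by (auto simp: le_Suc_eq card_1_singleton_iff)
qed simp

lemma co2plex_distribution_vertex_split:
  assumes \<mu>: "co2plex_distribution E x V \<mu>" and "p \<in> V"
  shows "x $ p = (\<Sum>S\<in>UNIV. \<mu> S * of_bool (p \<in> S \<and> nbhd E p \<inter> S = {})) +
    (\<Sum>u\<in>nbhd E p \<inter> V. max 0 (x $ p + x $ u - 1))"
proof -
  have supp: "\<And>S. \<mu> S \<noteq> 0 \<Longrightarrow> S \<subseteq> V \<and> co2plex E S"
    and marg: "(\<Sum>S\<in>UNIV. \<mu> S * of_bool (p \<in> S)) = x $ p"
    and edge: "\<And>u. u \<in> V \<Longrightarrow> E p u \<Longrightarrow>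
       (\<Sum>S\<in>UNIV. \<mu> S * of_bool (p \<in> S \<and> u \<in> S)) = max 0 (x $ p + x $ u - 1)"
    using \<mu> \<open>p \<in> V\<close> unfolding co2plex_distribution_def by auto
  have "x $ p = (\<Sum>S\<in>UNIV. \<mu> S * (of_bool (p \<in> S \<and> nbhd E p \<inter> S = {}) +
      (\<Sum>u\<in>nbhd E p \<inter> V. of_bool (p \<in> S \<and> u \<in> S))))"
    unfolding marg[symmetric] by (intro sum.cong refl) (metis co2plex_member_split mult_zero_left supp)
  also have "\<dots> = (\<Sum>S\<in>UNIV. \<mu> S * of_bool (p \<in> S \<and> nbhd E p \<inter> S = {})) +
      (\<Sum>u\<in>nbhd E p \<inter> V. \<Sum>S\<in>UNIV. \<mu> S * of_bool (p \<in> S \<and> u \<in> S))"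
    by (simp add: algebra_simps sum.distrib sum_distrib_left sum.swap[where A = UNIV]
        del: sum_of_bool_eq sum_mult_of_bool_eq of_bool_eq)
  also have "\<dots> = (\<Sum>S\<in>UNIV. \<mu> S * of_bool (p \<in> S \<and> nbhd E p \<inter> S = {})) +
      (\<Sum>u\<in>nbhd E p \<inter> V. max 0 (x $ p + x $ u - 1))"
    using edge by (simp add: nbhd_def del: sum_mult_of_bool_eq)
  finally show ?thesis .
qed

lemma T_polytope_neighbour_bound:
  assumes "x \<in> T_polytope E" and "N \<subseteq> nbhd E w" and "l \<in> nbhd E w" and "l \<notin> N"
  shows "x $ l + (\<Sum>u\<in>N. max 0 (x $ w + x $ u - 1)) \<le> 1"
proof -
  define W where "W = {u \<in> N. 0 < x $ w + x $ u - 1}"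
  have "finite W" "l \<notin> W" "insert l W \<subseteq> nbhd E w" using assms by (auto simp: W_def)
  moreover have "(\<Sum>a\<in>insert l W. x $ a) + (real (card (insert l W)) - 1) * x $ w \<le> real (card (insert l W))"
    using assms(1) \<open>insert l W \<subseteq> nbhd E w\<close> unfolding T_polytope_def by blast
  ultimately have "x $ l + (\<Sum>u\<in>W. x $ u) + real (card W) * x $ w \<le> real (card W) + 1"
    by simp
  moreover have "(\<Sum>u\<in>N. max 0 (x $ w + x $ u - 1)) = (\<Sum>u\<in>W. x $ w + x $ u - 1)"
    unfolding W_def by (subst sum.inter_filter) (auto simp: max_def intro!: sum.cong)
  moreover have "(\<Sum>u\<in>W. x $ w + x $ u - 1) = (\<Sum>u\<in>W. x $ u) + real (card W) * x $ w - real (card W)"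
    by (simp add: sum.distrib sum_subtractf)
  ultimately show ?thesis by linarith
qed

lemma co2plex_distribution_insert_pendant:
  assumes "simple_graph E" and "x \<in> T_polytope E" and \<mu>: "co2plex_distribution E x V \<mu>"
    and "l \<notin> V" and "p \<in> V" and "E l p" and unique: "\<And>u. u \<in> V \<Longrightarrow> E l u \<Longrightarrow> u = p"
  shows "\<exists>\<mu>'. co2plex_distribution E x (insert l V) \<mu>'"
proof -
  have sym: "E u v \<Longrightarrow> E v u" for u v using \<open>simple_graph E\<close> by (auto simp: simple_graph_def)
  have x01: "0 \<le> x $ v \<and> x $ v \<le> 1" for v using \<open>x \<in> T_polytope E\<close> by (auto simp: T_polytope_def)
  have nonneg: "\<And>S. 0 \<le> \<mu> S" and supp: "\<And>S. \<mu> S \<noteq> 0 \<Longrightarrow> S \<subseteq> V \<and> co2plex E S"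
    and total: "(\<Sum>S\<in>UNIV. \<mu> S) = 1" and marg_p: "(\<Sum>S\<in>UNIV. \<mu> S * of_bool (p \<in> S)) = x $ p"
    using \<mu> \<open>p \<in> V\<close> unfolding co2plex_distribution_def by auto
  define isolated where "isolated S \<longleftrightarrow> p \<in> S \<and> nbhd E p \<inter> S = {}" for S
  define A where "A = (\<Sum>S\<in>UNIV. \<mu> S * of_bool (p \<notin> S))"
  define B where "B = (\<Sum>S\<in>UNIV. \<mu> S * of_bool (isolated S))"
  define b where "b = max 0 (x $ l + x $ p - 1)"
  define a where "a = x $ l - b"
  \<comment> \<open>\<open>l\<close> is covered with probability \<open>a + b = x\<^sub>l\<close> and the edge \<open>lp\<close> with probability \<open>b\<close>.\<close>
  define \<alpha> where "\<alpha> S = of_bool (p \<notin> S) * (a / A) + of_bool (isolated S) * (b / B)" for S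
  have A_eq: "A = 1 - x $ p"
    using total marg_p by (simp add: A_def of_bool_not_iff algebra_simps sum_subtractf del: sum_mult_of_bool_eq)
  have "x $ p = B + (\<Sum>u\<in>nbhd E p \<inter> V. max 0 (x $ p + x $ u - 1))"
    using co2plex_distribution_vertex_split[OF \<mu> \<open>p \<in> V\<close>] by (simp add: B_def isolated_def)
  moreover have "x $ l + (\<Sum>u\<in>nbhd E p \<inter> V. max 0 (x $ p + x $ u - 1)) \<le> 1"
    using T_polytope_neighbour_bound[OF \<open>x \<in> T_polytope E\<close>, of "nbhd E p \<inter> V" p l]
      \<open>E l p\<close> \<open>l \<notin> V\<close> sym by (auto simp: nbhd_def)
  moreover have "0 \<le> B" unfolding B_def using nonneg by (auto intro: sum_nonneg)
  ultimately have b: "0 \<le> b" "b \<le> B" unfolding b_def by auto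
  have a: "0 \<le> a" "a \<le> A" using x01[of l] x01[of p] unfolding a_def b_def A_eq by auto
  have ratio: "0 \<le> c / C \<and> c / C \<le> 1 \<and> C * (c / C) = c" if "0 \<le> c" "c \<le> C" for c C :: real
    using that by (cases "C = 0") auto
  have "co2plex_distribution E x (insert l V) (extend_distribution \<mu> \<alpha> l)"
  proof (rule co2plex_distribution_extend[OF \<open>simple_graph E\<close> \<mu> \<open>l \<notin> V\<close>])
    show "0 \<le> \<alpha> S \<and> \<alpha> S \<le> 1" for S
      using ratio[OF a] ratio[OF b] by (auto simp: \<alpha>_def isolated_def)
    show "co2plex E (insert l S)" if "\<mu> S \<noteq> 0" "\<alpha> S \<noteq> 0" for S
    proof (rule co2plex_insert[OF \<open>simple_graph E\<close>])
      show "co2plex E S" using supp[OF \<open>\<mu> S \<noteq> 0\<close>] by blast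
      have "nbhd E l \<inter> S \<subseteq> {p}" using supp[OF \<open>\<mu> S \<noteq> 0\<close>] unique by (auto simp: nbhd_def)
      then show "card (nbhd E l \<inter> S) \<le> 1" using card_mono[of "{p}"] by fastforce
      show "nbhd E q \<inter> S = {}" if "q \<in> nbhd E l \<inter> S" for q
      proof -
        have "q = p" "p \<in> S" using that \<open>nbhd E l \<inter> S \<subseteq> {p}\<close> by auto
        then show ?thesis using \<open>\<alpha> S \<noteq> 0\<close> by (auto simp: \<alpha>_def isolated_def)
      qed
    qed
    have "(\<Sum>S\<in>UNIV. \<mu> S * \<alpha> S) = A * (a / A) + B * (b / B)"
      unfolding \<alpha>_def A_def B_def by (simp only: distrib_left sum.distrib sum_distrib_right mult.assoc)
    then show "(\<Sum>S\<in>UNIV. \<mu> S * \<alpha> S) = x $ l"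
      using ratio[OF a] ratio[OF b] by (simp add: a_def)
    show "(\<Sum>S\<in>UNIV. \<mu> S * (\<alpha> S * of_bool (u \<in> S))) = max 0 (x $ u + x $ l - 1)"
      if "u \<in> V" "E u l" for u
    proof -
      have "u = p" using unique sym that by blast
      then have "(\<Sum>S\<in>UNIV. \<mu> S * (\<alpha> S * of_bool (u \<in> S))) =
          (\<Sum>S\<in>UNIV. \<mu> S * of_bool (isolated S) * (b / B))"
        by (intro sum.cong) (auto simp: \<alpha>_def isolated_def)
      also have "\<dots> = B * (b / B)" by (simp only: B_def sum_distrib_right)
      finally show ?thesis using ratio[OF b] \<open>u = p\<close> by (simp add: b_def add.commute)
    qed
  qed
  then show ?thesis by blast
qed

lemma co2plex_distribution_insert_leaf:
  assumes "simple_graph E" and "x \<in> T_polytope E" and \<mu>: "co2plex_distribution E x V \<mu>"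
    and "l \<notin> V" and leaf: "\<forall>u\<in>V. \<forall>u'\<in>V. E l u \<longrightarrow> E l u' \<longrightarrow> u = u'"
  shows "\<exists>\<mu>'. co2plex_distribution E x (insert l V) \<mu>'"
proof (cases "\<exists>p\<in>V. E l p")
  case True
  then obtain p where "p \<in> V" "E l p" by blast
  then show ?thesis
    using co2plex_distribution_insert_pendant[OF assms(1-4)] leaf by blast
next
  case False
  have sym: "E u v \<Longrightarrow> E v u" for u v using \<open>simple_graph E\<close> by (auto simp: simple_graph_def)
  have supp: "\<And>S. \<mu> S \<noteq> 0 \<Longrightarrow> S \<subseteq> V \<and> co2plex E S" and total: "(\<Sum>S\<in>UNIV. \<mu> S) = 1"
    using \<mu> unfolding co2plex_distribution_def by auto
  have "co2plex_distribution E x (insert l V) (extend_distribution \<mu> (\<lambda>_. x $ l) l)"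
  proof (rule co2plex_distribution_extend[OF \<open>simple_graph E\<close> \<mu> \<open>l \<notin> V\<close>])
    show "0 \<le> x $ l \<and> x $ l \<le> 1" using \<open>x \<in> T_polytope E\<close> by (simp add: T_polytope_def)
    show "co2plex E (insert l S)" if "\<mu> S \<noteq> 0" for S
    proof -
      have "nbhd E l \<inter> S = {}" using supp[OF that] False by (auto simp: nbhd_def)
      then show ?thesis using co2plex_insert[OF \<open>simple_graph E\<close>, of S l] supp[OF that] by auto
    qed
    show "(\<Sum>S\<in>UNIV. \<mu> S * x $ l) = x $ l" using total by (simp add: sum_distrib_right[symmetric])
    show "(\<Sum>S\<in>UNIV. \<mu> S * (x $ l * of_bool (u \<in> S))) = max 0 (x $ u + x $ l - 1)"
      if "u \<in> V" "E u l" for u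
      using False that sym by blast
  qed
  then show ?thesis by blast
qed

lemma co2plex_distribution_exists:
  assumes "simple_graph E" and "\<not> has_cycle E" and "x \<in> T_polytope E"
  shows "\<exists>\<mu>. co2plex_distribution E x V \<mu>"
  using finite[of V]
proof (induction V rule: finite_psubset_induct)
  case (psubset V)
  show ?case
  proof (cases "V = {}")
    case True
    then have "co2plex_distribution E x V (\<lambda>S. of_bool (S = {}))"
      by (simp add: co2plex_distribution_def co2plex_def)
    then show ?thesis by blast
  next
    case False
    then obtain l where "l \<in> V" and leaf: "\<forall>u\<in>V. \<forall>u'\<in>V. E l u \<longrightarrow> E l u' \<longrightarrow> u = u'"
      using acyclic_ex_leaf[OF assms(1,2)] by blast
    then obtain \<mu> where "co2plex_distribution E x (V - {l}) \<mu>" using psubset.IH[of "V - {l}"] by blast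
    then have "\<exists>\<mu>'. co2plex_distribution E x (insert l (V - {l})) \<mu>'"
      using co2plex_distribution_insert_leaf[OF assms(1,3)] leaf by blast
    then show ?thesis using \<open>l \<in> V\<close> by (simp add: insert_absorb)
  qed
qed

theorem mainTheorem10:
  fixes E :: "'n::finite \<Rightarrow> 'n \<Rightarrow> bool"
  assumes "is_tree E"
  shows "co2plex_polytope E = T_polytope E"
proof
  show "co2plex_polytope E \<subseteq> T_polytope E"
    unfolding co2plex_polytope_def
    by (rule hull_minimal) (auto intro: charvec_in_T_polytope convex_T_polytope)
  show "T_polytope E \<subseteq> co2plex_polytope E"
  proof
    fix x assume "x \<in> T_polytope E"
    moreover have "simple_graph E" "\<not> has_cycle E" using assms by (auto simp: is_tree_def)
    ultimately obtain \<mu> where "co2plex_distribution E x UNIV \<mu>"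
      using co2plex_distribution_exists by blast
    then show "x \<in> co2plex_polytope E" by (rule co2plex_distribution_imp_in_co2plex_polytope)
  qed
qed

end
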